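(* Let $K\subseteq\mathbb R^2$ be a compact set containing no array on three points and let $\delta>0$. There exists $n_0\in\mathbb N$ such that for all $n\ge n_0$ the graphs $\Gamma^n_{\mathrm{hor}}$ and $\Gamma^n_{\mathrm{vert}}$ are disjoint (they have no common vertex).
   Context: An array on three points is a triple $a_1,a_2,a_3$ of points in the plane with $a_1\ne a_2$, $a_2\ne a_3$, such that the segments $[a_1;a_2]$ and $[a_2;a_3]$ are each parallel to a coordinate axis and are mutually orthogonal. Let $p(x,y)=x$, $q(x,y)=y$. For $n\in\mathbb N$ the graph $\Gamma^n$ has vertex set all lattice points $(i/2^n,j/2^n)$, $i,j\in\mathbb Z$, such that the square $[i/2^n;(i+1)/2^n)\times[j/2^n;(j+1)/2^n)$ meets $K$, and edges all two-element sets $\{u_1,u_2\}$ of vertices with $|p(u_1)-p(u_2)|\le 1/2^n$ or $|q(u_1)-q(u_2)|\le 1/2^n$. An edge $u_1u_2$ is vertical if $|p(u_1)-p(u_2)|\le 1/2^n$ and horizontal if $|q(u_1)-q(u_2)|\le 1/2^n$ (an edge may be both). It is long if the Euclidean distance $|u_1-u_2|\ge\delta$ and short if $|u_1-u_2|<\delta$. $\Gamma^n_{\mathrm{hor}}$ is the subgraph of $\Gamma^n$ formed by all long horizontal edges and their endpoints; $\Gamma^n_{\mathrm{vert}}$ is the subgraph formed by all long vertical edges and their endpoints. *)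

theory Defs
  imports "HOL-Analysis.Analysis"
begin

text \<open>Points of the plane are pairs of reals; p = fst, q = snd. The product metric
  on real \<times> real is the Euclidean distance.\<close>

definition is_array3 :: "real \<times> real \<Rightarrow> real \<times> real \<Rightarrow> real \<times> real \<Rightarrow> bool" where
  "is_array3 a1 a2 a3 \<longleftrightarrow> a1 \<noteq> a2 \<and> a2 \<noteq> a3 \<and>
     ((snd a1 = snd a2 \<and> fst a2 = fst a3) \<or> (fst a1 = fst a2 \<and> snd a2 = snd a3))"

definition grid_vertices :: "(real \<times> real) set \<Rightarrow> nat \<Rightarrow> (real \<times> real) set" where
  "grid_vertices K n = {(of_int i / 2^n, of_int j / 2^n) | i j :: int.
      ({of_int i / 2^n ..< (of_int i + 1) / 2^n} \<times> {of_int j / 2^n ..< (of_int j + 1) / 2^n}) \<inter> K \<noteq> {}}"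

definition grid_edges :: "(real \<times> real) set \<Rightarrow> nat \<Rightarrow> (real \<times> real) set set" where
  "grid_edges K n = {{u1, u2} | u1 u2. u1 \<in> grid_vertices K n \<and> u2 \<in> grid_vertices K n \<and> u1 \<noteq> u2 \<and>
      (\<bar>fst u1 - fst u2\<bar> \<le> 1 / 2^n \<or> \<bar>snd u1 - snd u2\<bar> \<le> 1 / 2^n)}"

definition long_hor_edges :: "(real \<times> real) set \<Rightarrow> real \<Rightarrow> nat \<Rightarrow> (real \<times> real) set set" where
  "long_hor_edges K \<delta> n = {{u1, u2} | u1 u2. {u1, u2} \<in> grid_edges K n \<and>
      \<bar>snd u1 - snd u2\<bar> \<le> 1 / 2^n \<and> dist u1 u2 \<ge> \<delta>}"

definition long_vert_edges :: "(real \<times> real) set \<Rightarrow> real \<Rightarrow> nat \<Rightarrow> (real \<times> real) set set" where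
  "long_vert_edges K \<delta> n = {{u1, u2} | u1 u2. {u1, u2} \<in> grid_edges K n \<and>
      \<bar>fst u1 - fst u2\<bar> \<le> 1 / 2^n \<and> dist u1 u2 \<ge> \<delta>}"

definition Gamma_hor_vertices :: "(real \<times> real) set \<Rightarrow> real \<Rightarrow> nat \<Rightarrow> (real \<times> real) set" where
  "Gamma_hor_vertices K \<delta> n = \<Union> (long_hor_edges K \<delta> n)"

definition Gamma_vert_vertices :: "(real \<times> real) set \<Rightarrow> real \<Rightarrow> nat \<Rightarrow> (real \<times> real) set" where
  "Gamma_vert_vertices K \<delta> n = \<Union> (long_vert_edges K \<delta> n)"

end

theory Submission
  imports Defs
begin

text \<open>Measure how far a triple \<open>(a, b, c)\<close> is from an array with corner \<open>a\<close> and both legs of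
  length at least \<open>\<delta>\<close> by a continuous defect. It is positive on the compact set \<open>K\<^sup>3\<close>, hence
  bounded below by some \<open>m > 0\<close>. A common vertex of \<open>\<Gamma>\<^sup>n\<^sub>h\<^sub>o\<^sub>r\<close> and \<open>\<Gamma>\<^sup>n\<^sub>v\<^sub>e\<^sub>r\<^sub>t\<close> gives three grid
  points of defect at most \<open>2 / 2\<^sup>n\<close>; moving each of them to a point of \<open>K\<close> in its grid cell
  changes the defect by \<open>O(2\<^sup>-\<^sup>n)\<close>, which is impossible once that is below \<open>m\<close>.\<close>

lemma dist_Pair_le_sum: "dist (a, b) (c, d) \<le> dist a c + dist b d"
  unfolding dist_Pair_Pair by (rule sqrt_sum_squares_le_sum) simp_all

lemma dist_le_dist_perturb:
  fixes a b x v :: "'a::metric_space"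
  assumes "dist a x \<le> r" "dist b v \<le> r"
  shows "dist a b \<le> dist x v + 2 * r"
  using assms dist_triangle[of a b x] dist_triangle[of x b v] dist_commute[of b v] by linarith

lemma compact_continuous_pos_lower_bound:
  fixes f :: "'a::topological_space \<Rightarrow> real"
  assumes "compact S" "continuous_on S f" "\<And>x. x \<in> S \<Longrightarrow> 0 < f x"
  shows "\<exists>m>0. \<forall>x\<in>S. m \<le> f x"
proof (cases "S = {}")
  case False
  then obtain x0 where "x0 \<in> S" "\<forall>y\<in>S. f x0 \<le> f y"
    using continuous_attains_inf assms(1,2) by blast
  then show ?thesis using assms(3) by blast
qed (auto intro: zero_less_one)

lemma grid_vertex_near:
  assumes "u \<in> grid_vertices K n"
  obtains a where "a \<in> K" "dist a u < 2 / 2^n"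
proof -
  obtain i j :: int where u: "u = (of_int i / 2^n, of_int j / 2^n)"
    and "({of_int i / 2^n ..< (of_int i + 1) / 2^n} \<times> {of_int j / 2^n ..< (of_int j + 1) / 2^n}) \<inter> K \<noteq> {}"
    using assms unfolding grid_vertices_def by blast
  then obtain a where a: "a \<in> K"
    "a \<in> {of_int i / 2^n ..< (of_int i + 1) / 2^n} \<times> {of_int j / 2^n ..< (of_int j + 1) / 2^n}"
    by blast
  have cell: "(k + 1) / 2^n = k / 2^n + 1 / (2::real)^n" for k :: real
    by (simp add: add_divide_distrib)
  have "dist (fst a) (fst u) < 1 / 2^n" "dist (snd a) (snd u) < 1 / 2^n"
    using a(2) unfolding u cell dist_real_def mem_Times_iff by auto
  then have "dist a u < 2 / 2^n"
    using dist_Pair_le_sum[of "fst a" "snd a" "fst u" "snd u"] by simp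
  with a(1) show thesis by (rule that)
qed

lemma grid_edge_vertices:
  assumes "{u1, u2} \<in> grid_edges K n"
  shows "u1 \<in> grid_vertices K n" "u2 \<in> grid_vertices K n"
  using assms by (auto simp: grid_edges_def doubleton_eq_iff)

lemma Gamma_hor_vertexD:
  assumes "x \<in> Gamma_hor_vertices K \<delta> n"
  obtains v where "x \<in> grid_vertices K n" "v \<in> grid_vertices K n"
    "\<bar>snd x - snd v\<bar> \<le> 1 / 2^n" "\<delta> \<le> dist x v"
proof -
  obtain u1 u2 where "x \<in> {u1, u2}" and edge: "{u1, u2} \<in> grid_edges K n"
    and "\<bar>snd u1 - snd u2\<bar> \<le> 1 / 2^n" "\<delta> \<le> dist u1 u2"
    using assms unfolding Gamma_hor_vertices_def long_hor_edges_def by blast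
  then show thesis
    using that[of u1] that[of u2] grid_edge_vertices[OF edge]
    by (auto simp: abs_minus_commute dist_commute)
qed

lemma Gamma_vert_vertexD:
  assumes "x \<in> Gamma_vert_vertices K \<delta> n"
  obtains w where "x \<in> grid_vertices K n" "w \<in> grid_vertices K n"
    "\<bar>fst x - fst w\<bar> \<le> 1 / 2^n" "\<delta> \<le> dist x w"
proof -
  obtain u1 u2 where "x \<in> {u1, u2}" and edge: "{u1, u2} \<in> grid_edges K n"
    and "\<bar>fst u1 - fst u2\<bar> \<le> 1 / 2^n" "\<delta> \<le> dist u1 u2"
    using assms unfolding Gamma_vert_vertices_def long_vert_edges_def by blast
  then show thesis
    using that[of u1] that[of u2] grid_edge_vertices[OF edge]
    by (auto simp: abs_minus_commute dist_commute)
qed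

text \<open>For \<open>\<delta> > 0\<close>, vanishes exactly when \<open>(b, a, c)\<close> is an array whose legs \<open>[b; a]\<close>
  and \<open>[a; c]\<close> have length at least \<open>\<delta>\<close>.\<close>
definition array_defect :: "real \<Rightarrow> real \<times> real \<Rightarrow> real \<times> real \<Rightarrow> real \<times> real \<Rightarrow> real" where
  "array_defect \<delta> a b c = dist (snd a) (snd b) + dist (fst a) (fst c)
     + max 0 (\<delta> - dist a b) + max 0 (\<delta> - dist a c)"

lemma array_defect_pos:
  assumes "0 < \<delta>" "\<not> is_array3 b a c"
  shows "0 < array_defect \<delta> a b c"
proof (rule ccontr)
  assume "\<not> 0 < array_defect \<delta> a b c"
  moreover have "0 \<le> dist (snd a) (snd b)" "0 \<le> dist (fst a) (fst c)"
    "0 \<le> max 0 (\<delta> - dist a b)" "0 \<le> max 0 (\<delta> - dist a c)"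
    by simp_all
  ultimately have "dist (snd a) (snd b) = 0" "dist (fst a) (fst c) = 0"
    "\<delta> \<le> dist a b" "\<delta> \<le> dist a c"
    unfolding array_defect_def by linarith+
  then have "is_array3 b a c"
    using \<open>0 < \<delta>\<close> unfolding is_array3_def by auto
  with assms(2) show False ..
qed

lemma array_defect_lower_bound:
  assumes "compact K" "\<not> (\<exists>a1\<in>K. \<exists>a2\<in>K. \<exists>a3\<in>K. is_array3 a1 a2 a3)" "0 < \<delta>"
  obtains m where "0 < m" "\<And>a b c. a \<in> K \<Longrightarrow> b \<in> K \<Longrightarrow> c \<in> K \<Longrightarrow> m \<le> array_defect \<delta> a b c"
proof -
  let ?f = "\<lambda>(a, b, c). array_defect \<delta> a b c"
  have "compact (K \<times> K \<times> K)"
    using assms(1) by (intro compact_Times)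
  moreover have "continuous_on (K \<times> K \<times> K) ?f"
    unfolding array_defect_def case_prod_unfold by (intro continuous_intros)
  moreover have "0 < ?f t" if "t \<in> K \<times> K \<times> K" for t
    using that assms(2,3) array_defect_pos by auto
  ultimately have "\<exists>m>0. \<forall>t\<in>K \<times> K \<times> K. m \<le> ?f t"
    by (rule compact_continuous_pos_lower_bound)
  then show thesis using that by fastforce
qed

lemma array_defect_perturb:
  assumes "dist a x \<le> r" "dist b v \<le> r" "dist c w \<le> r"
  shows "array_defect \<delta> a b c \<le> array_defect \<delta> x v w + 8 * r"
proof -
  have "dist x v \<le> dist a b + 2 * r" "dist x w \<le> dist a c + 2 * r"
    using assms by (intro dist_le_dist_perturb; simp add: dist_commute)+
  then have legs: "max 0 (\<delta> - dist a b) \<le> max 0 (\<delta> - dist x v) + 2 * r"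
    "max 0 (\<delta> - dist a c) \<le> max 0 (\<delta> - dist x w) + 2 * r"
    using zero_le_dist[of a x] assms(1) by arith+
  have "dist (snd a) (snd b) \<le> dist (snd x) (snd v) + 2 * r"
    using assms(1,2) by (intro dist_le_dist_perturb) (meson dist_snd_le order_trans)+
  moreover have "dist (fst a) (fst c) \<le> dist (fst x) (fst w) + 2 * r"
    using assms(1,3) by (intro dist_le_dist_perturb) (meson dist_fst_le order_trans)+
  ultimately have "array_defect \<delta> a b c \<le> (dist (snd x) (snd v) + 2 * r)
      + (dist (fst x) (fst w) + 2 * r) + (max 0 (\<delta> - dist x v) + 2 * r) + (max 0 (\<delta> - dist x w) + 2 * r)"
    unfolding array_defect_def using legs by (intro add_mono)
  then show ?thesis
    unfolding array_defect_def by (simp add: algebra_simps)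
qed

lemma common_vertex_near_array:
  assumes "x \<in> Gamma_hor_vertices K \<delta> n" "x \<in> Gamma_vert_vertices K \<delta> n"
  obtains a b c where "a \<in> K" "b \<in> K" "c \<in> K" "array_defect \<delta> a b c \<le> 18 / 2^n"
proof -
  obtain v where v: "x \<in> grid_vertices K n" "v \<in> grid_vertices K n"
    "\<bar>snd x - snd v\<bar> \<le> 1 / 2^n" "\<delta> \<le> dist x v"
    using assms(1) by (rule Gamma_hor_vertexD)
  obtain w where w: "w \<in> grid_vertices K n" "\<bar>fst x - fst w\<bar> \<le> 1 / 2^n" "\<delta> \<le> dist x w"
    using assms(2) by (rule Gamma_vert_vertexD)
  obtain a where a: "a \<in> K" "dist a x < 2 / 2^n"
    using v(1) by (rule grid_vertex_near)
  obtain b where b: "b \<in> K" "dist b v < 2 / 2^n"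
    using v(2) by (rule grid_vertex_near)
  obtain c where c: "c \<in> K" "dist c w < 2 / 2^n"
    using w(1) by (rule grid_vertex_near)
  have "array_defect \<delta> x v w \<le> 2 / 2^n"
    using v(3,4) w(2,3) unfolding array_defect_def dist_real_def by (simp add: max_absorb1)
  moreover have "array_defect \<delta> a b c \<le> array_defect \<delta> x v w + 8 * (2 / 2^n)"
    using a(2) b(2) c(2) by (intro array_defect_perturb) simp_all
  ultimately have "array_defect \<delta> a b c \<le> 18 / 2^n"
    by simp
  with a(1) b(1) c(1) show thesis by (rule that)
qed

theorem mainTheorem3:
  fixes K :: "(real \<times> real) set" and \<delta> :: real
  assumes "compact K"
    and "\<not> (\<exists>a1\<in>K. \<exists>a2\<in>K. \<exists>a3\<in>K. is_array3 a1 a2 a3)"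
    and "\<delta> > 0"
  shows "\<exists>n0::nat. \<forall>n\<ge>n0. Gamma_hor_vertices K \<delta> n \<inter> Gamma_vert_vertices K \<delta> n = {}"
proof -
  obtain m where m: "0 < m" "\<And>a b c. a \<in> K \<Longrightarrow> b \<in> K \<Longrightarrow> c \<in> K \<Longrightarrow> m \<le> array_defect \<delta> a b c"
    using array_defect_lower_bound assms by blast
  obtain n0 :: nat where n0: "(1/2) ^ n0 < m / 18"
    using real_arch_pow_inv[of "m / 18" "1/2"] m(1) by auto
  have "Gamma_hor_vertices K \<delta> n \<inter> Gamma_vert_vertices K \<delta> n = {}" if "n0 \<le> n" for n
  proof (rule ccontr)
    assume "Gamma_hor_vertices K \<delta> n \<inter> Gamma_vert_vertices K \<delta> n \<noteq> {}"
    then obtain a b c where "a \<in> K" "b \<in> K" "c \<in> K" "array_defect \<delta> a b c \<le> 18 / 2^n"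
      using common_vertex_near_array by blast
    moreover have "(1/2::real) ^ n \<le> (1/2) ^ n0"
      using that by (intro power_decreasing) auto
    with n0 have "18 / 2^n < m"
      by (simp add: power_one_over)
    ultimately show False
      using m(2) by fastforce
  qed
  then show ?thesis by blast
qed

end
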